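(* Let $\mathcal{D}$ and $\mathcal{F}$ be semistable vector bundles on the Fargues–Fontaine curve $X$ with $\mathrm{HNvec}(\mathcal{D})=(\vec\beta)$, $\mathrm{HNvec}(\mathcal{F})=(\vec\gamma)$ and $\vec\beta\preceq\vec\gamma$. Let $\mathcal{E}$ be a vector bundle on $X$ with $\mathrm{HN}(\mathcal{E})\le\mathrm{HN}(\mathcal{D}\oplus\mathcal{F})$ (same endpoints), and suppose the maximal slope of $\mathcal{E}$ is strictly less than the slope of $\mathcal{F}$. Let $\mathcal{K}$ be a vector bundle on $X$ with the same rank and degree as $\mathcal{D}$ such that (i) the maximal slope of $\mathcal{K}$ is at most the maximal slope of $\mathcal{E}$, and (ii) $\mathcal{K}$ is not semistable. Then \[\deg(\mathcal{K}^\vee\otimes\mathcal{E})^{\ge 0}<\deg(\mathcal{K}^\vee\otimes\mathcal{K})^{\ge 0}+\deg(\mathcal{E}^\vee\otimes\mathcal{F})^{\ge 0}.\]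
   Context: $X=X_{E,F}$ is the Fargues–Fontaine curve. For a bundle $\mathcal{V}\simeq\bigoplus_{i=1}^s\mathcal{O}(d_i/h_i)^{m_i}$ with $d_1/h_1>\cdots>d_s/h_s$ in lowest terms ($h_i>0$), the HN vectors are $\mathrm{HNvec}(\mathcal{V})=(v_i)$ with $v_i=(m_ih_i,m_id_i)$; for a semistable bundle this is the single vector $(\mathrm{rank},\deg)$. For vectors with nonzero $x$-coordinate, $v\preceq w$ means slope of $v\le$ slope of $w$. $\mathrm{HN}$ is the Harder–Narasimhan polygon starting at the origin, and $P\le P'$ means $P$ lies on or below $P'$ with the same endpoints. $\mathcal{U}^{\ge 0}$ is the step of the HN filtration of $\mathcal{U}$ consisting of HN pieces of slope $\ge 0$. *)

theory Defs
  imports Complex_Main "HOL-Library.Multiset"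
begin

text \<open>Vector bundles on the Fargues-Fontaine curve, up to isomorphism, via the
classification theorem: a vbundle is a finite direct sum of stable bundles O(q),
q a rational slope. O(q) with q = d/h in lowest terms (h > 0) has rank h and
degree d. A vbundle is represented by the multiset of slopes of its stable summands.\<close>

type_synonym vbundle = "rat multiset"

definition stab_rank :: "rat \<Rightarrow> nat" where
  "stab_rank q = nat (snd (quotient_of q))"

definition stab_deg :: "rat \<Rightarrow> int" where
  "stab_deg q = fst (quotient_of q)"

definition rk :: "vbundle \<Rightarrow> nat" where
  "rk V = (\<Sum>q\<in>#V. stab_rank q)"

definition dg :: "vbundle \<Rightarrow> int" where
  "dg V = (\<Sum>q\<in>#V. stab_deg q)"

definition slope :: "vbundle \<Rightarrow> rat" where
  "slope V = of_int (dg V) / of_nat (rk V)"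

definition max_slope :: "vbundle \<Rightarrow> rat" where
  "max_slope V = Max (set_mset V)"

definition semistable :: "vbundle \<Rightarrow> bool" where
  "semistable V \<longleftrightarrow> (\<forall>x\<in>#V. \<forall>y\<in>#V. x = y)"

text \<open>direct sum is multiset sum (+); dual: O(q)^dual = O(-q)\<close>
definition dual :: "vbundle \<Rightarrow> vbundle" where
  "dual V = image_mset uminus V"

text \<open>O(x) tensor O(y) is semistable of slope x+y and rank rk O(x) * rk O(y),
  i.e. isomorphic to O(x+y)^m with m = rk O(x) * rk O(y) / rk O(x+y).\<close>
definition tensor :: "vbundle \<Rightarrow> vbundle \<Rightarrow> vbundle" where
  "tensor V W = (\<Sum>x\<in>#V. \<Sum>y\<in>#W.
      replicate_mset (stab_rank x * stab_rank y div stab_rank (x + y)) (x + y))"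

text \<open>V^{>=0}: the HN filtration step consisting of the HN pieces of slope >= 0\<close>
definition nonneg_part :: "vbundle \<Rightarrow> vbundle" where
  "nonneg_part V = filter_mset (\<lambda>q. 0 \<le> q) V"

text \<open>HN polygon of V as a function on [0, rk V], starting at the origin,
  with segments of slope q and horizontal length (rank of slope-q part),
  arranged in decreasing order of slope.\<close>
definition HN :: "vbundle \<Rightarrow> real \<Rightarrow> real" where
  "HN V t = (\<Sum>q\<in>set_mset V. of_rat q *
      max 0 (min (real (rk (filter_mset (\<lambda>p. p = q) V)))
                 (t - real (rk (filter_mset (\<lambda>p. q < p) V)))))"

definition HN_le :: "vbundle \<Rightarrow> vbundle \<Rightarrow> bool" where
  "HN_le E V \<longleftrightarrow> rk E = rk V \<and> dg E = dg V \<and>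
     (\<forall>t. 0 \<le> t \<and> t \<le> real (rk V) \<longrightarrow> HN E t \<le> HN V t)"

end

theory Submission
  imports Defs
begin

(*
  For a bundle V and a real c put excess V c = \<Sum> rk O(q) * max 0 (q - c) over the stable
  summands O(q) of V. It is the height of the HN polygon of V above the line of slope c, i.e.
  the maximum of HN V t - c t, attained at the rank of the part of V of slope > c; and
  (O(-k) \<otimes> V)^{\<ge>0} has degree rk O(k) * excess V k. So all degrees in the theorem are sums of
  excesses over the stable summands O(k) of K.

  From HN(E) \<le> HN(D \<oplus> F) we get excess E k \<le> excess (D \<oplus> F) k for k < slope F, strictly
  when slope D < k: the polygon of D \<oplus> F has its vertex at rk F, and at that vertex the bound
  is attained only by a part of E of slope \<ge> slope F, which does not exist. The maximal slope
  of the non-semistable K lies strictly between slope D = slope K and slope F. Finally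
  excess (D \<oplus> F) = excess D + excess F; the D-part is at most the K-part because by convexity
  a semistable bundle has the least excess among bundles of its rank and degree, and the
  F-part equals rk D deg F - rk F deg D = deg (E^\<or> \<otimes> F)^{\<ge>0}, since all slopes of K and of E
  are below slope F.
*)

lemma stab_rank_pos: "0 < stab_rank q"
  unfolding stab_rank_def using quotient_of_denom_pos' by simp

lemma of_int_stab_deg: "real_of_int (stab_deg q) = real (stab_rank q) * real_of_rat q"
proof -
  obtain a b where ab: "quotient_of q = (a, b)" by (cases "quotient_of q")
  then have "b > 0" "q = of_int a / of_int b"
    using quotient_of_denom_pos quotient_of_div by blast+
  then show ?thesis
    using ab unfolding stab_deg_def stab_rank_def by (simp add: of_rat_divide)
qed

lemma stab_rank_uminus [simp]: "stab_rank (- q) = stab_rank q"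
  unfolding stab_rank_def rat_uminus_code by (simp add: case_prod_beta)

lemma quotient_of_denom_dvd:
  assumes "q * of_int n = of_int m"
  shows "snd (quotient_of q) dvd n"
proof -
  obtain a b where ab: "quotient_of q = (a, b)" by (cases "quotient_of q")
  have "b > 0" "q = of_int a / of_int b" "coprime a b"
    using quotient_of_denom_pos[OF ab] quotient_of_div[OF ab] quotient_of_coprime[OF ab] by auto
  then have "of_int (a * n) = (of_int (m * b) :: rat)"
    using assms by (simp add: field_simps) (metis mult.assoc mult.commute)
  then have "b dvd a * n"
    by (metis dvd_triv_right of_int_eq_iff)
  then show ?thesis
    using ab \<open>coprime a b\<close> by (simp add: coprime_commute coprime_dvd_mult_right_iff)
qed

lemma stab_rank_add_dvd: "stab_rank (x + y) dvd stab_rank x * stab_rank y"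
proof -
  obtain a b where ab: "quotient_of x = (a, b)" by (cases "quotient_of x")
  obtain c d where cd: "quotient_of y = (c, d)" by (cases "quotient_of y")
  have pos: "b > 0" "d > 0"
    using quotient_of_denom_pos ab cd by blast+
  have "(x + y) * of_int (b * d) = of_int (a * d + c * b)"
    using quotient_of_div[OF ab] quotient_of_div[OF cd] pos by (simp add: field_simps)
  then have "snd (quotient_of (x + y)) dvd b * d"
    by (rule quotient_of_denom_dvd)
  then have "nat (snd (quotient_of (x + y))) dvd nat (b * d)"
    using quotient_of_denom_pos'[of "x + y"] pos by (simp add: nat_dvd_iff)
  then show ?thesis
    unfolding stab_rank_def using ab cd pos by (simp add: nat_mult_distrib)
qed

lemma of_int_sum_mset: "of_int (\<Sum>x\<in>#M. f x) = (\<Sum>x\<in>#M. of_int (f x))"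
  by (induction M) simp_all

lemma sum_mset_filter_mset: "(\<Sum>x\<in>#filter_mset P M. f x) = (\<Sum>x\<in>#M. if P x then f x else 0)"
  by (induction M) simp_all

lemma sum_mset_eq_sum_count:
  "(\<Sum>x\<in>#M. f x) = (\<Sum>x\<in>set_mset M. of_nat (count M x) * (f x :: 'a :: comm_semiring_1))"
proof -
  have swap: "(\<Sum>x\<in>A. \<Sum>y\<in>#N. g x y) = (\<Sum>y\<in>#N. \<Sum>x\<in>A. g x y)" for A N and g :: "_ \<Rightarrow> _ \<Rightarrow> 'a"
    by (induction N) (simp_all add: sum.distrib)
  have "(\<Sum>x\<in>set_mset M. of_nat (count M x) * f x) = (\<Sum>x\<in>set_mset M. \<Sum>y\<in>#M. if y = x then f x else 0)"
    by (simp add: sum_mset_delta mult.commute)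
  also have "\<dots> = (\<Sum>y\<in>#M. f y)"
    unfolding swap by (intro arg_cong[where f = sum_mset] image_mset_cong) (simp add: sum.delta')
  finally show ?thesis ..
qed

lemma sum_mset_strict_mono:
  fixes f g :: "'a \<Rightarrow> 'b :: ordered_cancel_comm_monoid_add"
  assumes "\<And>x. x \<in># M \<Longrightarrow> f x \<le> g x" and "a \<in># M" and "f a < g a"
  shows "(\<Sum>x\<in>#M. f x) < (\<Sum>x\<in>#M. g x)"
proof -
  obtain M' where M: "M = add_mset a M'"
    using assms(2) by (metis insert_DiffM)
  have "(\<Sum>x\<in>#M'. f x) \<le> (\<Sum>x\<in>#M'. g x)"
    using assms(1) M by (intro sum_mset_mono) auto
  then show ?thesis
    using M assms(3) by (simp add: add_less_le_mono)
qed

lemma filter_mset_replicate_mset: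
  "filter_mset P (replicate_mset n x) = (if P x then replicate_mset n x else {#})"
  by (induction n) simp_all

lemma real_rk: "real (rk V) = (\<Sum>q\<in>#V. real (stab_rank q))"
  unfolding rk_def by (induction V) simp_all

lemma real_dg: "real_of_int (dg V) = (\<Sum>q\<in>#V. real (stab_rank q) * real_of_rat q)"
  unfolding dg_def by (induction V) (simp_all add: of_int_stab_deg)

lemma real_dg_sub_eq:
  "real_of_int (dg V) - c * real (rk V) = (\<Sum>q\<in>#V. real (stab_rank q) * (real_of_rat q - c))"
  unfolding real_dg real_rk by (induction V) (simp_all add: algebra_simps)

lemma rk_empty [simp]: "rk {#} = 0"
  unfolding rk_def by simp

lemma rk_union [simp]: "rk (V + W) = rk V + rk W"
  unfolding rk_def by simp

lemma dg_union [simp]: "dg (V + W) = dg V + dg W"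
  unfolding dg_def by simp

lemma rk_pos: "V \<noteq> {#} \<Longrightarrow> 0 < rk V"
  unfolding rk_def using stab_rank_pos by (metis multiset_nonemptyE insert_DiffM sum_mset.insert add_pos_nonneg zero_le)

lemma rk_mono: "V \<subseteq># W \<Longrightarrow> rk V \<le> rk W"
  by (metis le_add1 rk_union subset_mset.add_diff_inverse)

lemma real_rk_filter: "real (rk (filter_mset P V)) = (\<Sum>q\<in>#V. if P q then real (stab_rank q) else 0)"
  unfolding rk_def by (induction V) simp_all

lemma real_dg_filter:
  "real_of_int (dg (filter_mset P V)) = (\<Sum>q\<in>#V. if P q then real (stab_rank q) * real_of_rat q else 0)"
  unfolding dg_def by (induction V) (simp_all add: of_int_stab_deg)

lemma rk_replicate_mset: "rk (replicate_mset n q) = n * stab_rank q"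
  unfolding rk_def by simp

lemma slope_replicate_mset:
  assumes "0 < n"
  shows "slope (replicate_mset n q) = q"
proof -
  have "real_of_rat (slope (replicate_mset n q)) = real_of_int (int n * stab_deg q) / real (n * stab_rank q)"
    unfolding slope_def rk_replicate_mset dg_def by (simp add: of_rat_divide)
  also have "\<dots> = real_of_rat q"
    using of_int_stab_deg[of q] stab_rank_pos[of q] assms by simp
  finally show ?thesis
    by simp
qed

lemma real_dg_eq_rk_mult_slope:
  "V \<noteq> {#} \<Longrightarrow> real_of_int (dg V) = real (rk V) * real_of_rat (slope V)"
  unfolding slope_def using rk_pos[of V] by (simp add: of_rat_divide)

lemma semistable_eq_replicate:
  assumes "semistable V" and "V \<noteq> {#}"
  obtains n where "V = replicate_mset n (slope V)" and "0 < n"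
proof -
  obtain q where q: "q \<in># V"
    using assms(2) by (meson multiset_nonemptyE)
  then have V: "V = replicate_mset (count V q) q"
    using assms(1) unfolding semistable_def by (auto simp: multiset_eq_iff not_in_iff[symmetric])
  then have "slope V = q"
    using q slope_replicate_mset[of "count V q" q] by simp
  then show thesis
    using that V q by simp
qed

lemma slope_less_max_slope:
  assumes "\<not> semistable V"
  shows "slope V < max_slope V"
proof -
  obtain x y where xy: "x \<in># V" "y \<in># V" "x \<noteq> y"
    using assms unfolding semistable_def by blast
  define m where "m = max_slope V"
  have le_m: "q \<le> m" if "q \<in># V" for q
    unfolding m_def max_slope_def using that by simp
  have "min x y < m" and min_mem: "min x y \<in># V"
    using xy le_m[of x] le_m[of y] by (auto simp: min_def)
  have "(\<Sum>q\<in>#V. real (stab_rank q) * (real_of_rat q - real_of_rat m)) < (\<Sum>q\<in>#V. 0)"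
  proof (rule sum_mset_strict_mono[OF _ min_mem])
    fix q assume "q \<in># V"
    then show "real (stab_rank q) * (real_of_rat q - real_of_rat m) \<le> 0"
      using le_m by (simp add: mult_nonneg_nonpos of_rat_less_eq)
  next
    show "real (stab_rank (min x y)) * (real_of_rat (min x y) - real_of_rat m) < 0"
      using \<open>min x y < m\<close> stab_rank_pos by (simp add: mult_pos_neg of_rat_less)
  qed
  then have "real_of_int (dg V) < real_of_rat m * real (rk V)"
    unfolding real_dg_sub_eq[symmetric] by simp
  moreover have "real_of_int (dg V) = real (rk V) * real_of_rat (slope V)"
    using real_dg_eq_rk_mult_slope xy by (metis empty_iff set_mset_empty)
  ultimately have "real_of_rat (slope V) < real_of_rat m"
    by (metis mult.commute mult_le_cancel_left of_nat_0_le_iff not_le)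
  then show ?thesis
    unfolding m_def by (simp add: of_rat_less)
qed

section \<open>Excess over a line\<close>

definition excess :: "vbundle \<Rightarrow> real \<Rightarrow> real" where
  "excess V c = (\<Sum>q\<in>#V. real (stab_rank q) * max 0 (real_of_rat q - c))"

lemma dg_sum_mset: "dg (\<Sum>x\<in>#A. G x) = (\<Sum>x\<in>#A. dg (G x))"
  by (induction A) (simp_all add: dg_def)

lemma nonneg_part_sum_mset: "nonneg_part (\<Sum>x\<in>#A. G x) = (\<Sum>x\<in>#A. nonneg_part (G x))"
  unfolding nonneg_part_def by (induction A) simp_all

lemma dg_nonneg_part_tensor_stable:
  "real_of_int (dg (nonneg_part (replicate_mset (stab_rank x * stab_rank y div stab_rank (x + y)) (x + y))))
     = real (stab_rank x) * real (stab_rank y) * max 0 (real_of_rat (x + y))"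
proof -
  define n where "n = stab_rank x * stab_rank y div stab_rank (x + y)"
  have "real n * real (stab_rank (x + y)) = real (stab_rank x) * real (stab_rank y)"
    unfolding n_def using stab_rank_add_dvd by (simp flip: of_nat_mult)
  then show ?thesis
    unfolding n_def[symmetric] nonneg_part_def dg_def
    by (simp add: filter_mset_replicate_mset of_int_stab_deg max_def mult.assoc)
qed

lemma dg_nonneg_part_tensor_dual:
  "real_of_int (dg (nonneg_part (tensor (dual W) V)))
     = (\<Sum>x\<in>#W. real (stab_rank x) * excess V (real_of_rat x))"
  unfolding tensor_def dual_def excess_def nonneg_part_sum_mset dg_sum_mset
  by (simp add: multiset.map_comp comp_def of_int_sum_mset
      dg_nonneg_part_tensor_stable[of "- x" for x, simplified]
      sum_mset_distrib_left of_rat_diff mult.assoc)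

lemma excess_union: "excess (V + W) c = excess V c + excess W c"
  unfolding excess_def by simp

lemma excess_nonneg: "0 \<le> excess V c"
  unfolding excess_def by (induction V) simp_all

lemma dg_sub_le_excess: "real_of_int (dg V) - c * real (rk V) \<le> excess V c"
  unfolding real_dg_sub_eq excess_def by (intro sum_mset_mono mult_left_mono) simp_all

lemma excess_semistable:
  assumes "semistable V"
  shows "excess V c = real (rk V) * max 0 (real_of_rat (slope V) - c)"
proof (cases "V = {#}")
  case False
  then obtain n where V: "V = replicate_mset n (slope V)"
    using assms semistable_eq_replicate by blast
  have "excess (replicate_mset n q) c = real (rk (replicate_mset n q)) * max 0 (real_of_rat q - c)" for q
    by (simp add: excess_def rk_replicate_mset)
  then show ?thesis
    by (metis V)
qed (simp add: excess_def rk_def)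

lemma excess_semistable_le:
  assumes "semistable V" and "rk V = rk W" and "dg V = dg W"
  shows "excess V c \<le> excess W c"
proof (cases "V = {#}")
  case False
  have "slope V = slope W"
    using assms unfolding slope_def by simp
  then have "excess V c = max 0 (real_of_int (dg W) - c * real (rk W))"
    using assms excess_semistable real_dg_eq_rk_mult_slope[OF False]
    by (simp add: max_mult_distrib_left algebra_simps)
  then show ?thesis
    using excess_nonneg dg_sub_le_excess by simp
next
  case True
  then show ?thesis
    using excess_nonneg[of W c] by (simp add: excess_def)
qed

lemma dg_nonneg_part_tensor_dual_eq:
  assumes "\<And>x y. x \<in># W \<Longrightarrow> y \<in># V \<Longrightarrow> x \<le> y"
  shows "dg (nonneg_part (tensor (dual W) V)) = int (rk W) * dg V - int (rk V) * dg W"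
proof -
  have "excess V (real_of_rat x) = real_of_int (dg V) - real_of_rat x * real (rk V)" if "x \<in># W" for x
    unfolding excess_def real_dg_sub_eq using assms that
    by (intro arg_cong[where f = sum_mset] image_mset_cong) (simp add: of_rat_less_eq)
  then have "real_of_int (dg (nonneg_part (tensor (dual W) V)))
      = (\<Sum>x\<in>#W. real (stab_rank x) * (real_of_int (dg V) - real_of_rat x * real (rk V)))"
    unfolding dg_nonneg_part_tensor_dual by (intro arg_cong[where f = sum_mset] image_mset_cong) simp
  also have "\<dots> = real (rk W) * real_of_int (dg V) - real (rk V) * real_of_int (dg W)"
    unfolding real_dg[of W] real_rk[of W] by (induction W) (simp_all add: algebra_simps)
  finally have "real_of_int (dg (nonneg_part (tensor (dual W) V)))
      = real_of_int (int (rk W) * dg V - int (rk V) * dg W)"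
    by simp
  then show ?thesis
    by (rule of_int_eq_iff[THEN iffD1])
qed

section \<open>Comparison of excesses via HN polygons\<close>

lemma HN_rk_filter_greater:
  "HN V (real (rk (filter_mset (\<lambda>p. c < p) V))) = real_of_int (dg (filter_mset (\<lambda>p. c < p) V))"
proof -
  define T where "T = rk (filter_mset (\<lambda>p. c < p) V)"
  have segment: "real_of_rat q * max 0 (min (real (rk (filter_mset (\<lambda>p. p = q) V)))
        (real T - real (rk (filter_mset (\<lambda>p. q < p) V))))
      = of_nat (count V q) * (if c < q then real (stab_rank q) * real_of_rat q else 0)" for q
  proof (cases "c < q")
    case True
    have "real (rk (filter_mset (\<lambda>p. q < p) V)) + real (rk (filter_mset (\<lambda>p. p = q) V)) \<le> real T"
      unfolding T_def real_rk_filter sum_mset.distrib[symmetric] using True by (intro sum_mset_mono) auto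
    then show ?thesis
      using True by (simp add: filter_eq_replicate_mset rk_replicate_mset)
  next
    case False
    have "real T \<le> real (rk (filter_mset (\<lambda>p. q < p) V))"
      unfolding T_def real_rk_filter using False by (intro sum_mset_mono) auto
    then show ?thesis
      using False by simp
  qed
  have "HN V (real T) = (\<Sum>q\<in>set_mset V. of_nat (count V q) * (if c < q then real (stab_rank q) * real_of_rat q else 0))"
    unfolding HN_def segment ..
  also have "\<dots> = real_of_int (dg (filter_mset (\<lambda>p. c < p) V))"
    unfolding real_dg_filter by (rule sum_mset_eq_sum_count[symmetric])
  finally show ?thesis
    unfolding T_def .
qed

lemma excess_eq_HN_sub:
  fixes V :: vbundle and c :: rat
  defines "T \<equiv> real (rk (filter_mset (\<lambda>p. c < p) V))"
  shows "excess V (real_of_rat c) = HN V T - real_of_rat c * T"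
proof -
  have "excess V (real_of_rat c) = (\<Sum>q\<in>#filter_mset (\<lambda>p. c < p) V. real (stab_rank q) * (real_of_rat q - real_of_rat c))"
    unfolding excess_def sum_mset_filter_mset
    by (intro arg_cong[where f = sum_mset] image_mset_cong) (auto simp: max_def of_rat_less of_rat_less_eq)
  then show ?thesis
    unfolding T_def HN_rk_filter_greater real_dg_sub_eq .
qed

lemma HN_union_semistable:
  assumes "semistable D" "D \<noteq> {#}" "semistable F" "F \<noteq> {#}" "slope D \<le> slope F"
  shows "HN (D + F) t = real_of_rat (slope F) * max 0 (min (real (rk F)) t)
           + real_of_rat (slope D) * max 0 (min (real (rk D)) (t - real (rk F)))"
proof -
  define d f where "d = slope D" and "f = slope F"
  obtain a b where D: "D = replicate_mset a d" "0 < a" and F: "F = replicate_mset b f" "0 < b"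
    using assms semistable_eq_replicate unfolding d_def f_def by metis
  have "HN (D + F) t = real_of_rat f * max 0 (min (real (rk F)) t)
           + real_of_rat d * max 0 (min (real (rk D)) (t - real (rk F)))"
  proof (cases "d = f")
    case True
    then have "HN (D + F) t = real_of_rat f * max 0 (min (real (rk D) + real (rk F)) t)"
      unfolding HN_def D F by (simp add: filter_mset_replicate_mset rk_replicate_mset algebra_simps)
    then show ?thesis
      using True by (simp add: max_def min_def algebra_simps)
  next
    case False
    then have "d < f"
      using assms(5) unfolding d_def f_def by simp
    moreover have "set_mset (D + F) = {d, f}"
      using D F by (simp add: insert_commute)
    ultimately show ?thesis
      unfolding HN_def D F by (simp add: filter_mset_replicate_mset rk_replicate_mset)
  qed
  then show ?thesis
    unfolding d_def f_def .
qed

lemma two_segment_polygon_le: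
  fixes d f c t rD rF :: real
  assumes "c < f" "0 \<le> rD" "0 \<le> rF" "0 \<le> t" "t \<le> rD + rF"
  shows "f * max 0 (min rF t) + d * max 0 (min rD (t - rF)) - c * t \<le> rF * (f - c) + rD * max 0 (d - c)"
proof (cases "t \<le> rF")
  case True
  have "(f - c) * t \<le> rF * (f - c)"
    using assms True by (simp add: mult.commute mult_left_mono)
  moreover have "0 \<le> rD * max 0 (d - c)"
    using assms by simp
  moreover have "f * max 0 (min rF t) + d * max 0 (min rD (t - rF)) - c * t = (f - c) * t"
    using True assms by (simp add: algebra_simps)
  ultimately show ?thesis
    by linarith
next
  case False
  have "(d - c) * (t - rF) \<le> max 0 (d - c) * rD"
    using False assms by (cases "d \<le> c") (auto intro: mult_mono mult_nonpos_nonneg order.trans[of _ 0])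
  then show ?thesis
    using False assms by (simp add: algebra_simps)
qed

lemma two_segment_polygon_less:
  fixes d f c t rD rF :: real
  assumes "d < c" "c < f" "0 \<le> rF" "0 \<le> t" "t \<le> rD + rF" "t \<noteq> rF"
  shows "f * max 0 (min rF t) + d * max 0 (min rD (t - rF)) - c * t < rF * (f - c)"
proof (cases "t < rF")
  case True
  have "(f - c) * t < (f - c) * rF"
    using assms True by (intro mult_strict_left_mono) auto
  then show ?thesis
    using True assms by (simp add: algebra_simps)
next
  case False
  then have "(d - c) * (t - rF) < 0"
    using assms by (intro mult_neg_pos) auto
  then show ?thesis
    using False assms by (simp add: algebra_simps)
qed

lemma excess_less_rk_filter_greater:
  assumes "\<forall>q\<in>#V. q < f" and "filter_mset (\<lambda>p. c < p) V \<noteq> {#}"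
  shows "excess V (real_of_rat c)
           < (real_of_rat f - real_of_rat c) * real (rk (filter_mset (\<lambda>p. c < p) V))"
proof -
  obtain e where "e \<in># filter_mset (\<lambda>p. c < p) V"
    using assms(2) by (meson multiset_nonemptyE)
  then have e: "e \<in># V" "c < e"
    by simp_all
  have "excess V (real_of_rat c)
      < (\<Sum>q\<in>#V. if c < q then real (stab_rank q) * (real_of_rat f - real_of_rat c) else 0)"
    unfolding excess_def
  proof (rule sum_mset_strict_mono[OF _ e(1)])
    fix q assume "q \<in># V"
    then have "real_of_rat q < real_of_rat f"
      using assms(1) by (simp add: of_rat_less)
    then show "real (stab_rank q) * max 0 (real_of_rat q - real_of_rat c)
        \<le> (if c < q then real (stab_rank q) * (real_of_rat f - real_of_rat c) else 0)"
      by (auto simp: max_def of_rat_less of_rat_less_eq not_less intro!: mult_left_mono)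
  next
    have "real_of_rat c < real_of_rat e" "real_of_rat e < real_of_rat f"
      using e assms(1) by (simp_all add: of_rat_less)
    then show "real (stab_rank e) * max 0 (real_of_rat e - real_of_rat c)
        < (if c < e then real (stab_rank e) * (real_of_rat f - real_of_rat c) else 0)"
      using e(2) stab_rank_pos[of e] by simp
  qed
  also have "\<dots> = (real_of_rat f - real_of_rat c) * real (rk (filter_mset (\<lambda>p. c < p) V))"
    unfolding real_rk_filter sum_mset_distrib_left
    by (intro arg_cong[where f = sum_mset] image_mset_cong) simp
  finally show ?thesis .
qed

lemma excess_le_of_HN_le_union_semistable:
  assumes "semistable D" "D \<noteq> {#}" "semistable F" "F \<noteq> {#}" "slope D \<le> slope F"
    and "HN_le E (D + F)" and "c < slope F"
  shows "excess E (real_of_rat c) \<le> excess (D + F) (real_of_rat c)"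
    and "\<forall>e\<in>#E. e < slope F \<Longrightarrow> slope D < c
           \<Longrightarrow> excess E (real_of_rat c) < excess (D + F) (real_of_rat c)"
proof -
  define T where "T = real (rk (filter_mset (\<lambda>p. c < p) E))"
  have "rk E = rk D + rk F"
    using assms(6) unfolding HN_le_def by simp
  then have T: "0 \<le> T" "T \<le> real (rk D) + real (rk F)"
    unfolding T_def using rk_mono[OF multiset_filter_subset, of _ E] by (simp_all flip: of_nat_add)
  then have HN_E: "HN E T \<le> HN (D + F) T"
    using assms(6) unfolding HN_le_def by simp
  have excess_E: "excess E (real_of_rat c)
      \<le> real_of_rat (slope F) * max 0 (min (real (rk F)) T)
         + real_of_rat (slope D) * max 0 (min (real (rk D)) (T - real (rk F))) - real_of_rat c * T"
    using HN_E unfolding T_def excess_eq_HN_sub HN_union_semistable[OF assms(1-5)] by simp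
  have excess_DF: "excess (D + F) (real_of_rat c)
      = real (rk F) * (real_of_rat (slope F) - real_of_rat c)
        + real (rk D) * max 0 (real_of_rat (slope D) - real_of_rat c)"
    using assms(1,3,7) by (simp add: excess_union excess_semistable of_rat_less)
  have c_less: "real_of_rat c < real_of_rat (slope F)"
    using assms(7) by (simp add: of_rat_less)
  show "excess E (real_of_rat c) \<le> excess (D + F) (real_of_rat c)"
    unfolding excess_DF using excess_E two_segment_polygon_le[OF c_less _ _ T, of "real_of_rat (slope D)"]
    by simp
  assume below: "\<forall>e\<in>#E. e < slope F" and "slope D < c"
  then have excess_DF': "excess (D + F) (real_of_rat c) = real (rk F) * (real_of_rat (slope F) - real_of_rat c)"
    unfolding excess_DF by (simp add: of_rat_less)
  show "excess E (real_of_rat c) < excess (D + F) (real_of_rat c)"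
  proof (cases "T = real (rk F)")
    case True
    then have "filter_mset (\<lambda>p. c < p) E \<noteq> {#}"
      using rk_pos[OF assms(4)] unfolding T_def by (metis less_irrefl of_nat_eq_iff rk_empty)
    then have "excess E (real_of_rat c) < (real_of_rat (slope F) - real_of_rat c) * T"
      unfolding T_def by (rule excess_less_rk_filter_greater[OF below])
    then show ?thesis
      unfolding excess_DF' True by (simp add: mult.commute)
  next
    case False
    have "real_of_rat (slope D) < real_of_rat c"
      using \<open>slope D < c\<close> by (simp add: of_rat_less)
    from two_segment_polygon_less[OF this c_less _ T False]
    show ?thesis
      unfolding excess_DF' using excess_E by simp
  qed
qed

lemma dg_nonneg_part_tensor_dual_le_semistable:
  assumes "semistable V" and "rk V = rk W" and "dg V = dg W"
  shows "dg (nonneg_part (tensor (dual U) V)) \<le> dg (nonneg_part (tensor (dual U) W))"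
proof -
  have "excess V (real_of_rat k) \<le> excess W (real_of_rat k)" for k
    using excess_semistable_le assms by simp
  then have "real_of_int (dg (nonneg_part (tensor (dual U) V)))
      \<le> real_of_int (dg (nonneg_part (tensor (dual U) W)))"
    unfolding dg_nonneg_part_tensor_dual by (intro sum_mset_mono mult_left_mono) simp_all
  then show ?thesis
    by simp
qed

lemma dg_nonneg_part_tensor_dual_less_union_semistable:
  assumes "semistable D" "D \<noteq> {#}" "semistable F" "F \<noteq> {#}" "slope D \<le> slope F"
    and "HN_le E (D + F)" and "\<forall>e\<in>#E. e < slope F"
    and "\<forall>k\<in>#W. k < slope F" and "k \<in># W" and "slope D < k"
  shows "dg (nonneg_part (tensor (dual W) E))
           < dg (nonneg_part (tensor (dual W) D)) + dg (nonneg_part (tensor (dual W) F))"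
proof -
  have "real_of_int (dg (nonneg_part (tensor (dual W) E)))
      < (\<Sum>k\<in>#W. real (stab_rank k) * excess (D + F) (real_of_rat k))"
    unfolding dg_nonneg_part_tensor_dual
  proof (rule sum_mset_strict_mono[OF _ assms(9)])
    fix k' assume "k' \<in># W"
    then show "real (stab_rank k') * excess E (real_of_rat k')
        \<le> real (stab_rank k') * excess (D + F) (real_of_rat k')"
      using assms(8) excess_le_of_HN_le_union_semistable(1)[OF assms(1-6)] by (simp add: mult_left_mono)
  next
    show "real (stab_rank k) * excess E (real_of_rat k) < real (stab_rank k) * excess (D + F) (real_of_rat k)"
      using assms(7-10) stab_rank_pos excess_le_of_HN_le_union_semistable(2)[OF assms(1-6)] by simp
  qed
  also have "\<dots> = real_of_int (dg (nonneg_part (tensor (dual W) D)))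
      + real_of_int (dg (nonneg_part (tensor (dual W) F)))"
    unfolding dg_nonneg_part_tensor_dual excess_union by (simp add: distrib_left sum_mset.distrib)
  finally show ?thesis
    by linarith
qed

theorem theorem5p1:
  fixes D F E K :: vbundle
  assumes "semistable D" and "D \<noteq> {#}"
    and "semistable F" and "F \<noteq> {#}"
    and "slope D \<le> slope F"
    and "HN_le E (D + F)"
    and "max_slope E < slope F"
    and "rk K = rk D" and "dg K = dg D"
    and "max_slope K \<le> max_slope E"
    and "\<not> semistable K"
  shows "dg (nonneg_part (tensor (dual K) E))
           < dg (nonneg_part (tensor (dual K) K)) + dg (nonneg_part (tensor (dual E) F))"
proof -
  have rk_E: "rk E = rk D + rk F" and dg_E: "dg E = dg D + dg F"
    using assms(6) unfolding HN_le_def by simp_all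
  then have "E \<noteq> {#}" and "K \<noteq> {#}"
    using rk_pos[OF assms(2)] assms(8) by auto
  then have E_below: "\<forall>e\<in>#E. e < slope F" and K_below: "\<forall>k\<in>#K. k < slope F"
    using assms(7,10) unfolding max_slope_def by (meson Max_ge finite_set_mset le_less_trans)+
  have F_eq: "f = slope F" if "f \<in># F" for f
    using that assms(3,4) semistable_eq_replicate by (metis in_replicate_mset)
  have "slope K = slope D"
    using assms(8,9) unfolding slope_def by simp
  then have "slope D < max_slope K" and "max_slope K \<in># K"
    using slope_less_max_slope[OF assms(11)] \<open>K \<noteq> {#}\<close> unfolding max_slope_def by simp_all
  then have "dg (nonneg_part (tensor (dual K) E))
      < dg (nonneg_part (tensor (dual K) D)) + dg (nonneg_part (tensor (dual K) F))"
    using dg_nonneg_part_tensor_dual_less_union_semistable[OF assms(1-6) E_below K_below] by blast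
  moreover have "dg (nonneg_part (tensor (dual K) D)) \<le> dg (nonneg_part (tensor (dual K) K))"
    using dg_nonneg_part_tensor_dual_le_semistable assms(1,8,9) by simp
  moreover have "dg (nonneg_part (tensor (dual K) F)) = int (rk K) * dg F - int (rk F) * dg K"
    using K_below F_eq by (intro dg_nonneg_part_tensor_dual_eq) force
  moreover have "dg (nonneg_part (tensor (dual E) F)) = int (rk E) * dg F - int (rk F) * dg E"
    using E_below F_eq by (intro dg_nonneg_part_tensor_dual_eq) force
  ultimately show ?thesis
    using rk_E dg_E assms(8,9) by (simp add: algebra_simps)
qed

end
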